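(* Let $x_0\in C^\eta_p$ (some $\eta\in\mathbb{N}^p$) be continuous on $[-\tau,0]$, and let $x:[-\tau,T]\to\mathbb{R}^d$ be a solution with initial segment $x_0$. Let $t=mh+\varepsilon$ with $m\in\mathbb{N}$, $0<\varepsilon<h$, $t+h\le T$, and let $n=\lfloor m/p\rfloor-1$; assume $n\ge0$. Write $x_m:=x_{mh}$ and $x_{m+1}:=x_{(m+1)h}$. Let $\zeta,\zeta'\in\mathbb{N}^p$ be such that $x_m\in C^\zeta_p$ with $\zeta_i\ge n$ for all $i$, and $x_{m+1}\in C^{\zeta'}_p$. Let $\Xi'$ be a box containing $\xi_1(x_{m+1})([0,h))$, and for $i\in\{1,\dots,p\}$ let $\Xi_i$ be a box containing $\xi_i(x_m)([0,h))$, $L_i$ a box containing $x^{[n+1]}(s)$ for all $s\in[(m-i)h,(m-i+1)h)$, and $R_i$ a box containing $x^{[n+1]}(s)$ for all $s\in[(m-i+1)h,(m-i+1)h+\varepsilon]$. Then: (a) $x_t\in C^n_p$ and $x_t\in C^{n+1}([-\tau,0])$; (b) $z(x_t)\in\sum_{k=0}^{\zeta'_1} j_{1,[k]}(x_{m+1})\,\varepsilon^k+\Xi'\,\varepsilon^{\zeta'_1+1}$; (c) for $i\in\{1,\dots,p\}$ and $k\in\{0,\dots,n\}$: $j_{i,[k]}(x_t)\in\sum_{l=0}^{\zeta_i-k}\binom{k+l}{k} j_{i,[k+l]}(x_m)\,\varepsilon^l+\binom{\zeta_i+1}{k}\,\Xi_i\,\varepsilon^{\zeta_i+1-k}$; (d)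 for $i\in\{1,\dots,p\}$ and all $s\in[0,h)$: $\xi_i(x_t)(s)\in\mathrm{hull}(L_i,R_i)$.
   Context: Fix integers $d\ge1$, $p\ge1$, a delay $\tau>0$, and set $h=\tau/p$, grid points $t_i=-ih$. Let $f:\mathbb{R}^d\times\mathbb{R}^d\to\mathbb{R}^d$ be $C^\infty$ and consider the DDE $x'(t)=f(x(t),x(t-\tau))$. Segments: $x_t(s)=x(t+s)$, $s\in[-\tau,0]$. For $g$ of class $C^k$, $g^{[k]}:=g^{(k)}/k!$ (one-sided derivatives at endpoints). For $\eta\in\mathbb{N}^p$, $C^\eta_p$ is the set of $x:[-\tau,0]\to\mathbb{R}^d$ such that for each $i$ the restriction of $x$ to $[t_i,t_i+h)$ coincides with the restriction of some $\tilde x_i\in C^{\eta_i+1}([t_i,t_i+h])$; for $s\in[t_i,t_i+h)$, $x^{[k]}(s):=\tilde x_i^{[k]}(s)$ ($k\le\eta_i+1$). $C^n_p:=C^{(n,\dots,n)}_p$. For $x\in C^\eta_p$: $z(x)=x(0)$, $j_{i,[k]}(x)=x^{[k]}(t_i)$ for $0\le k\le\eta_i$, and $\xi_i(x)(s)=x^{[\eta_i+1]}(t_i+s)$ for $s\in[0,h)$ (for $C^n_p$, $\xi_i(x)(s)=x^{[n+1]}(t_i+s)$). A solution on $[-\tau,T]$ with initial segment $x_0$ is $x:[-\tau,T]\to\mathbb{R}^d$ with $x|_{[-\tau,0]}=x_0$, continuous on $[0,T]$, whose right derivative at each $t\in[0,T)$ exists and equals $f(x(t),x(t-\tau))$. A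 box is a product of $d$ compact intervals; $\mathrm{hull}(A_1,\dots,A_r)$ is the smallest box containing $A_1\cup\dots\cup A_r$; vector-plus-box and scalar-times-box are elementwise. *)

theory Defs
  imports "HOL-Analysis.Analysis"
begin

fun pdiff :: "'a::real_normed_vector list \<Rightarrow> ('a \<Rightarrow> 'b::real_normed_vector) \<Rightarrow> 'a \<Rightarrow> 'b" where
  "pdiff [] g = g"
| "pdiff (v # vs) g = (\<lambda>y. frechet_derivative (pdiff vs g) (at y) v)"

definition C_inf :: "('a::real_normed_vector \<Rightarrow> 'b::real_normed_vector) \<Rightarrow> bool" where
  "C_inf g \<longleftrightarrow> (\<forall>vs. continuous_on UNIV (pdiff vs g) \<and> (\<forall>y. pdiff vs g differentiable (at y)))"

fun hderiv :: "nat \<Rightarrow> real set \<Rightarrow> (real \<Rightarrow> 'a::real_normed_vector) \<Rightarrow> real \<Rightarrow> 'a" where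
  "hderiv 0 S g = g"
| "hderiv (Suc k) S g = (\<lambda>t. vector_derivative (hderiv k S g) (at t within S))"

definition Ck :: "nat \<Rightarrow> real set \<Rightarrow> (real \<Rightarrow> 'a::real_normed_vector) \<Rightarrow> bool" where
  "Ck k S g \<longleftrightarrow>
     (\<forall>j<k. \<forall>t\<in>S. (hderiv j S g has_vector_derivative hderiv (Suc j) S g t) (at t within S))
   \<and> (\<forall>j\<le>k. continuous_on S (hderiv j S g))"

text \<open>Normalised piecewise derivative g^[k](s) = g^(k)(s)/k!, the derivative taken within
  the grid cell [a, a+h) containing s, where a = h * floor(s/h).\<close>
definition pw_deriv :: "real \<Rightarrow> nat \<Rightarrow> (real \<Rightarrow> 'a::real_normed_vector) \<Rightarrow> real \<Rightarrow> 'a" where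
  "pw_deriv h k g s =
     (let a = h * of_int \<lfloor>s / h\<rfloor> in (1 / fact k) *\<^sub>R hderiv k {a..<a+h} g s)"

definition Cp :: "real \<Rightarrow> nat \<Rightarrow> (nat \<Rightarrow> nat) \<Rightarrow> (real \<Rightarrow> 'a::real_normed_vector) \<Rightarrow> bool" where
  "Cp h p eta x \<longleftrightarrow>
     (\<forall>i\<in>{1..p}. \<exists>g. Ck (eta i + 1) {-(real i*h) .. -(real i*h) + h} g
                      \<and> (\<forall>s\<in>{-(real i*h) ..< -(real i*h) + h}. g s = x s))"

definition zfun :: "(real \<Rightarrow> 'a) \<Rightarrow> 'a" where
  "zfun x = x 0"

definition jfun :: "real \<Rightarrow> nat \<Rightarrow> nat \<Rightarrow> (real \<Rightarrow> 'a::real_normed_vector) \<Rightarrow> 'a" where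
  "jfun h i k x = pw_deriv h k x (-(real i*h))"

definition xifun :: "real \<Rightarrow> (nat \<Rightarrow> nat) \<Rightarrow> nat \<Rightarrow> (real \<Rightarrow> 'a::real_normed_vector) \<Rightarrow> real \<Rightarrow> 'a" where
  "xifun h eta i x s = pw_deriv h (eta i + 1) x (-(real i*h) + s)"

definition seg :: "(real \<Rightarrow> 'a) \<Rightarrow> real \<Rightarrow> real \<Rightarrow> 'a" where
  "seg x t = (\<lambda>s. x (t + s))"

definition is_solution ::
  "('a::real_normed_vector \<Rightarrow> 'a \<Rightarrow> 'a) \<Rightarrow> real \<Rightarrow> real \<Rightarrow> (real \<Rightarrow> 'a) \<Rightarrow> (real \<Rightarrow> 'a) \<Rightarrow> bool" where
  "is_solution f tau T x0 x \<longleftrightarrow>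
     (\<forall>s\<in>{-tau..0}. x s = x0 s)
   \<and> continuous_on {0..T} x
   \<and> (\<forall>t\<in>{0..<T}. (x has_vector_derivative f (x t) (x (t - tau))) (at_right t))"

definition is_box :: "(real ^ 'n) set \<Rightarrow> bool" where
  "is_box B \<longleftrightarrow> (\<exists>a b. (\<forall>i. a $ i \<le> b $ i) \<and> B = cbox a b)"

definition box_hull :: "(real ^ 'n) set \<Rightarrow> (real ^ 'n) set" where
  "box_hull A = \<Inter>{B. is_box B \<and> A \<subseteq> B}"

definition box_affine :: "'a::real_vector \<Rightarrow> real \<Rightarrow> 'a set \<Rightarrow> 'a set" where
  "box_affine v c B = (\<lambda>w. v + c *\<^sub>R w) ` B"

end

theory Submission
  imports Defs
begin

text \<open>
  Method of steps: x' = f(x, x(. - tau)) with smooth f, so on every delay interval x gains one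
  derivative and is C^(m div p) on [m h - tau, (m + 1) h], which contains every point that the
  segment x_t, t = m h + eps, looks at. The grid data of x_t are then derivatives of x itself.
  The expansions (b) and (c) are Taylor's formula with integral remainder for the cell
  representatives of x_(m+1) and x_m, shifted by eps; the remainder is a nonnegative weight times
  a function with values in the given box, hence a positive multiple of a point of that box.
  For (d), the point t - i h + s at which x_t is differentiated lies in the cell
  [(m - i) h, (m - i + 1) h) or in [(m - i + 1) h, (m - i + 1) h + eps].
\<close>

section \<open>Calculus of the classes C^k on subsets of the real line\<close>

definition dense_in_itself :: "'a::topological_space set \<Rightarrow> bool" where
  "dense_in_itself S \<longleftrightarrow> (\<forall>x\<in>S. x islimpt S)"

lemma dense_in_itself_Icc: "a < b \<Longrightarrow> dense_in_itself {a..b::real}"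
  by (simp add: dense_in_itself_def)

lemma dense_in_itself_Ico: "a < b \<Longrightarrow> dense_in_itself {a..<b::real}"
  by (auto simp: dense_in_itself_def)

lemma dense_in_itself_vector_derivative_within:
  "dense_in_itself S \<Longrightarrow> t \<in> S \<Longrightarrow> (f has_vector_derivative D) (at t within S) \<Longrightarrow>
    vector_derivative f (at t within S) = D"
  by (rule vector_derivative_within) (auto simp: dense_in_itself_def trivial_limit_within)

lemma hderiv_Suc_inner: "hderiv (Suc j) S g = hderiv j S (hderiv (Suc 0) S g)"
  by (induction j) auto

lemma hderiv_cong: "(\<And>s. s \<in> S \<Longrightarrow> f s = g s) \<Longrightarrow> s \<in> S \<Longrightarrow> hderiv j S f s = hderiv j S g s"
proof (induction j arbitrary: s)
  case (Suc j)
  then show ?case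
    by (auto intro!: vector_derivative_cong_eq simp: always_eventually)
qed simp

lemma Ck_cong:
  assumes "\<And>s. s \<in> S \<Longrightarrow> f s = g s"
  shows "Ck k S f \<longleftrightarrow> Ck k S g"
proof -
  have eq: "\<And>j s. s \<in> S \<Longrightarrow> hderiv j S f s = hderiv j S g s"
    by (rule hderiv_cong[OF assms])
  have "\<And>j t D. t \<in> S \<Longrightarrow> (hderiv j S f has_vector_derivative D) (at t within S) \<longleftrightarrow>
        (hderiv j S g has_vector_derivative D) (at t within S)"
    by (intro iffI; erule has_vector_derivative_weaken) (auto simp: eq)
  moreover have "\<And>j. continuous_on S (hderiv j S f) \<longleftrightarrow> continuous_on S (hderiv j S g)"
    by (intro continuous_on_cong) (auto simp: eq)
  ultimately show ?thesis
    unfolding Ck_def by (auto simp: eq simp del: hderiv.simps)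
qed

lemma Ck_0_iff: "Ck 0 S f \<longleftrightarrow> continuous_on S f"
  by (simp add: Ck_def)

lemma Ck_mono: "Ck k S f \<Longrightarrow> j \<le> k \<Longrightarrow> Ck j S f"
  by (auto simp: Ck_def)

lemma Ck_imp_continuous_on: "Ck k S f \<Longrightarrow> continuous_on S f"
  by (auto simp: Ck_def dest: spec[of _ 0])

lemma Ck_SucD:
  assumes "Ck (Suc k) S f"
  shows "t \<in> S \<Longrightarrow> (f has_vector_derivative hderiv (Suc 0) S f t) (at t within S)"
    and "Ck k S (hderiv (Suc 0) S f)"
proof -
  show "t \<in> S \<Longrightarrow> (f has_vector_derivative hderiv (Suc 0) S f t) (at t within S)"
    using assms unfolding Ck_def by (metis hderiv.simps(1) zero_less_Suc)
  show "Ck k S (hderiv (Suc 0) S f)"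
    using assms unfolding Ck_def hderiv_Suc_inner[symmetric] by auto
qed

lemma Ck_SucI:
  assumes S: "dense_in_itself S"
    and f': "\<And>t. t \<in> S \<Longrightarrow> (f has_vector_derivative f' t) (at t within S)"
    and f: "continuous_on S f" and "Ck k S f'"
  shows "Ck (Suc k) S f"
proof -
  have hderiv1: "\<And>t. t \<in> S \<Longrightarrow> hderiv (Suc 0) S f t = f' t"
    using dense_in_itself_vector_derivative_within[OF S] f' by auto
  then have ck: "Ck k S (hderiv (Suc 0) S f)"
    using Ck_cong \<open>Ck k S f'\<close> by blast
  show ?thesis unfolding Ck_def
  proof safe
    fix j t assume "j < Suc k" "t \<in> S"
    then show "(hderiv j S f has_vector_derivative hderiv (Suc j) S f t) (at t within S)"
    proof (cases j)
      case 0
      then show ?thesis using f' \<open>t \<in> S\<close> hderiv1 by simp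
    next
      case (Suc i)
      then show ?thesis
        using ck \<open>j < Suc k\<close> \<open>t \<in> S\<close> unfolding Ck_def
        by (simp only: hderiv_Suc_inner[of i S f] hderiv_Suc_inner[of "Suc i" S f])
    qed
  next
    fix j assume "j \<le> Suc k"
    then show "continuous_on S (hderiv j S f)"
    proof (cases j)
      case (Suc i)
      then show ?thesis
        using ck \<open>j \<le> Suc k\<close> unfolding Ck_def by (simp only: hderiv_Suc_inner[of i S f])
    qed (use f in simp)
  qed
qed

lemma Ck_const: "dense_in_itself S \<Longrightarrow> Ck k S (\<lambda>_. c)"
proof (induction k arbitrary: c)
  case (Suc k)
  then show ?case by (intro Ck_SucI[where f'="\<lambda>_. 0"]) auto
qed (simp add: Ck_0_iff)

lemma Ck_add: "dense_in_itself S \<Longrightarrow> Ck k S f \<Longrightarrow> Ck k S g \<Longrightarrow> Ck k S (\<lambda>s. f s + g s)"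
proof (induction k arbitrary: f g)
  case (Suc k)
  note f = Ck_SucD[OF Suc.prems(2)] and g = Ck_SucD[OF Suc.prems(3)]
  show ?case
    using Suc.IH[OF Suc.prems(1) f(2) g(2)] f(1) g(1)
      Ck_imp_continuous_on[OF Suc.prems(2)] Ck_imp_continuous_on[OF Suc.prems(3)]
    by (intro Ck_SucI[OF Suc.prems(1)]) (auto intro!: has_vector_derivative_add continuous_on_add)
qed (simp add: Ck_0_iff continuous_on_add)

lemma Ck_bounded_linear:
  "dense_in_itself S \<Longrightarrow> bounded_linear L \<Longrightarrow> Ck k S f \<Longrightarrow> Ck k S (\<lambda>s. L (f s))"
proof (induction k arbitrary: f)
  case (Suc k)
  note f = Ck_SucD[OF Suc.prems(3)]
  show ?case
    using Suc.IH[OF Suc.prems(1,2) f(2)] f(1) Ck_imp_continuous_on[OF Suc.prems(3)]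
      bounded_linear.has_vector_derivative[OF Suc.prems(2)]
      bounded_linear.continuous_on[OF Suc.prems(2)]
    by (intro Ck_SucI[OF Suc.prems(1)]) auto
qed (simp add: Ck_0_iff bounded_linear.continuous_on)

lemma Ck_scaleR:
  "dense_in_itself S \<Longrightarrow> Ck k S (a :: real \<Rightarrow> real) \<Longrightarrow> Ck k S g \<Longrightarrow> Ck k S (\<lambda>s. a s *\<^sub>R g s)"
proof (induction k arbitrary: a g)
  case (Suc k)
  note a = Ck_SucD[OF Suc.prems(2)] and g = Ck_SucD[OF Suc.prems(3)]
  have "Ck k S (\<lambda>s. a s *\<^sub>R hderiv (Suc 0) S g s + hderiv (Suc 0) S a s *\<^sub>R g s)"
    using Suc.IH[OF Suc.prems(1) Ck_mono[OF Suc.prems(2)] g(2)]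
      Suc.IH[OF Suc.prems(1) a(2) Ck_mono[OF Suc.prems(3)]]
    by (intro Ck_add Suc.prems(1)) auto
  then show ?case
    using a(1) g(1) Ck_imp_continuous_on[OF Suc.prems(2)] Ck_imp_continuous_on[OF Suc.prems(3)]
    by (intro Ck_SucI[OF Suc.prems(1)])
      (auto intro!: has_vector_derivative_scaleR continuous_on_scaleR
        simp: has_real_derivative_iff_has_vector_derivative)
qed (simp add: Ck_0_iff continuous_on_scaleR)

lemma Ck_sum:
  assumes "dense_in_itself S" "\<And>i. i \<in> I \<Longrightarrow> Ck k S (f i)"
  shows "Ck k S (\<lambda>s. \<Sum>i\<in>I. f i s)"
proof (cases "finite I")
  case True
  then show ?thesis
    using assms(2) by induction (auto intro!: Ck_add Ck_const assms(1))
qed (simp add: Ck_const assms(1))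

lemma Ck_Pair: "dense_in_itself S \<Longrightarrow> Ck k S f \<Longrightarrow> Ck k S g \<Longrightarrow> Ck k S (\<lambda>s. (f s, g s))"
proof (induction k arbitrary: f g)
  case (Suc k)
  note f = Ck_SucD[OF Suc.prems(2)] and g = Ck_SucD[OF Suc.prems(3)]
  show ?case
    using Suc.IH[OF Suc.prems(1) f(2) g(2)] f(1) g(1)
      Ck_imp_continuous_on[OF Suc.prems(2)] Ck_imp_continuous_on[OF Suc.prems(3)]
    by (intro Ck_SucI[OF Suc.prems(1)]) (auto intro!: has_vector_derivative_Pair continuous_on_Pair)
qed (simp add: Ck_0_iff continuous_on_Pair)

lemma C_inf_pdiff: "C_inf g \<Longrightarrow> C_inf (pdiff [b] g)"
proof -
  have "pdiff vs (pdiff [b] g) = pdiff (vs @ [b]) g" for vs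
    by (induction vs) auto
  then show "C_inf g \<Longrightarrow> C_inf (pdiff [b] g)"
    unfolding C_inf_def by metis
qed

lemma C_inf_has_derivative: "C_inf g \<Longrightarrow> (g has_derivative frechet_derivative g (at y)) (at y)"
  unfolding C_inf_def by (metis frechet_derivative_works pdiff.simps(1))

lemma C_inf_continuous_on: "C_inf g \<Longrightarrow> continuous_on UNIV g"
  unfolding C_inf_def by (metis pdiff.simps(1))

lemma Ck_compose_C_inf:
  fixes g :: "'a::euclidean_space \<Rightarrow> 'b::real_normed_vector"
  assumes S: "dense_in_itself S"
  shows "C_inf g \<Longrightarrow> Ck k S \<gamma> \<Longrightarrow> Ck k S (\<lambda>s. g (\<gamma> s))"
proof (induction k arbitrary: g \<gamma>)
  case 0
  then show ?case
    using continuous_on_compose2[OF C_inf_continuous_on[OF 0(1)], of S \<gamma>] by (simp add: Ck_0_iff)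
next
  case (Suc k)
  note \<gamma> = Ck_SucD[OF Suc.prems(2)]
  define D where "D = hderiv (Suc 0) S \<gamma>"
  define G where "G s = (\<Sum>b\<in>Basis. (D s \<bullet> b) *\<^sub>R pdiff [b] g (\<gamma> s))" for s
  have lin: "linear (frechet_derivative g (at y))" for y
    using C_inf_has_derivative[OF Suc.prems(1)] has_derivative_linear by blast
  \<comment> \<open>the chain-rule derivative, expanded in the basis so that the induction hypothesis applies\<close>
  have G: "G s = frechet_derivative g (at (\<gamma> s)) (D s)" for s
  proof -
    have "frechet_derivative g (at (\<gamma> s)) (D s) =
        frechet_derivative g (at (\<gamma> s)) (\<Sum>b\<in>Basis. (D s \<bullet> b) *\<^sub>R b)"
      by (simp add: euclidean_representation)
    then show ?thesis
      using lin[of "\<gamma> s"] by (simp add: G_def linear_sum linear_scale)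
  qed
  have "Ck k S G"
    unfolding G_def
  proof (rule Ck_sum[OF S])
    fix b :: 'a
    have "Ck k S (\<lambda>s. D s \<bullet> b)"
      using Ck_bounded_linear[OF S bounded_linear_inner_left \<gamma>(2)] unfolding D_def .
    moreover have "Ck k S (\<lambda>s. pdiff [b] g (\<gamma> s))"
      using Suc.IH[OF C_inf_pdiff[OF Suc.prems(1)] Ck_mono[OF Suc.prems(2)]] by simp
    ultimately show "Ck k S (\<lambda>s. (D s \<bullet> b) *\<^sub>R pdiff [b] g (\<gamma> s))"
      by (rule Ck_scaleR[OF S])
  qed
  moreover have "((\<lambda>s. g (\<gamma> s)) has_vector_derivative G t) (at t within S)" if "t \<in> S" for t
  proof -
    have "(\<gamma> has_derivative (\<lambda>x. x *\<^sub>R D t)) (at t within S)"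
      using \<gamma>(1)[OF that] unfolding D_def has_vector_derivative_def .
    from diff_chain_within[OF this has_derivative_subset[OF C_inf_has_derivative[OF Suc.prems(1)]]]
    show ?thesis
      using lin[of "\<gamma> t"] by (simp add: has_vector_derivative_def o_def G linear_scale)
  qed
  moreover have "continuous_on S (\<lambda>s. g (\<gamma> s))"
    using continuous_on_compose2[OF C_inf_continuous_on[OF Suc.prems(1)]
        Ck_imp_continuous_on[OF Suc.prems(2)]] by simp
  ultimately show ?case
    by (intro Ck_SucI[OF S]) auto
qed

lemma hderiv_subset:
  assumes T: "dense_in_itself T" "T \<subseteq> S" and g: "Ck k S g"
  shows "j \<le> k \<Longrightarrow> s \<in> T \<Longrightarrow> hderiv j T g s = hderiv j S g s"
proof (induction j arbitrary: s)
  case (Suc j)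
  have "(hderiv j S g has_vector_derivative hderiv (Suc j) S g s) (at s within S)"
    using g Suc.prems T(2) unfolding Ck_def by auto
  then have "(hderiv j T g has_vector_derivative hderiv (Suc j) S g s) (at s within T)"
    using Suc T(2) by (auto elim!: has_vector_derivative_weaken)
  then show ?case
    using dense_in_itself_vector_derivative_within[OF T(1) Suc.prems(2)] by simp
qed simp

lemma Ck_subset:
  assumes T: "dense_in_itself T" "T \<subseteq> S" and g: "Ck k S g"
  shows "Ck k T g"
  unfolding Ck_def
proof safe
  fix j t assume j: "j < k" and t: "t \<in> T"
  have "(hderiv j S g has_vector_derivative hderiv (Suc j) S g t) (at t within S)"
    using g j t T(2) unfolding Ck_def by auto
  then show "(hderiv j T g has_vector_derivative hderiv (Suc j) T g t) (at t within T)"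
    using hderiv_subset[OF T g, of "Suc j" t] hderiv_subset[OF T g, of j] j t T(2)
    by (auto elim!: has_vector_derivative_weaken simp del: hderiv.simps)
next
  fix j assume j: "j \<le> k"
  have "continuous_on T (hderiv j S g)"
    using g j T(2) unfolding Ck_def by (auto intro: continuous_on_subset)
  then show "continuous_on T (hderiv j T g)"
    using hderiv_subset[OF T g j] by (metis continuous_on_cong)
qed

lemma seg_0 [simp]: "seg x 0 = x"
  by (simp add: seg_def)

lemma has_vector_derivative_seg_iff:
  "(f has_vector_derivative D) (at (c + s) within S) \<longleftrightarrow>
   (seg f c has_vector_derivative D) (at s within {u. c + u \<in> S})"
proof -
  have shift: "(seg F c' has_vector_derivative D') (at s' within {u. c' + u \<in> S'})"
    if "(F has_vector_derivative D') (at (c' + s') within S')" for F D' c' s' S'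
  proof -
    have "((\<lambda>u. c' + u) has_vector_derivative 1) (at s' within {u. c' + u \<in> S'})"
      by (auto intro!: derivative_eq_intros)
    moreover have "(\<lambda>u. c' + u) ` {u. c' + u \<in> S'} = S'"
      by (auto simp: image_iff intro!: exI[of _ "_ - c'"])
    ultimately show ?thesis
      using vector_diff_chain_within that by (fastforce simp: o_def seg_def)
  qed
  show ?thesis
  proof
    assume "(seg f c has_vector_derivative D) (at s within {u. c + u \<in> S})"
    then have "(seg f c has_vector_derivative D) (at (- c + (c + s)) within {u. c + u \<in> S})"
      by simp
    from shift[OF this] show "(f has_vector_derivative D) (at (c + s) within S)"
      by (simp add: seg_def)
  qed (rule shift)
qed

lemma hderiv_seg:
  "c + s \<in> S \<Longrightarrow> hderiv j {u. c + u \<in> S} (seg f c) s = hderiv j S f (c + s)"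
proof (induction j arbitrary: s)
  case 0
  then show ?case by (simp add: seg_def)
next
  case (Suc j)
  have "vector_derivative (hderiv j {u. c + u \<in> S} (seg f c)) (at s within {u. c + u \<in> S})
      = vector_derivative (seg (hderiv j S f) c) (at s within {u. c + u \<in> S})"
    using Suc by (intro vector_derivative_cong_eq) (auto simp: always_eventually seg_def)
  also have "\<dots> = vector_derivative (hderiv j S f) (at (c + s) within S)"
    unfolding vector_derivative_def has_vector_derivative_seg_iff ..
  finally show ?case by simp
qed

lemma Ck_seg_shift:
  assumes "Ck k S f"
  shows "Ck k {u. c + u \<in> S} (seg f c)"
  unfolding Ck_def
proof safe
  fix j t assume j: "j < k" and t: "c + t \<in> S"
  have "(hderiv j S f has_vector_derivative hderiv (Suc j) S f (c + t)) (at (c + t) within S)"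
    using assms j t unfolding Ck_def by auto
  then have "(seg (hderiv j S f) c has_vector_derivative hderiv (Suc j) S f (c + t))
      (at t within {u. c + u \<in> S})"
    by (simp add: has_vector_derivative_seg_iff)
  moreover have "seg (hderiv j S f) c u = hderiv j {u. c + u \<in> S} (seg f c) u"
    if "u \<in> {u. c + u \<in> S}" for u
    using that by (metis hderiv_seg mem_Collect_eq seg_def)
  moreover have "hderiv (Suc j) {u. c + u \<in> S} (seg f c) t = hderiv (Suc j) S f (c + t)"
    using t by (rule hderiv_seg)
  ultimately show "(hderiv j {u. c + u \<in> S} (seg f c) has_vector_derivative
      hderiv (Suc j) {u. c + u \<in> S} (seg f c) t) (at t within {u. c + u \<in> S})"
    using t by (metis (no_types, lifting) has_vector_derivative_weaken mem_Collect_eq order_refl)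
next
  fix j assume j: "j \<le> k"
  have "continuous_on S (hderiv j S f)"
    using assms j unfolding Ck_def by auto
  then have "continuous_on {u. c + u \<in> S} (seg (hderiv j S f) c)"
    unfolding seg_def by (rule continuous_on_compose2) (auto intro!: continuous_intros)
  then show "continuous_on {u. c + u \<in> S} (hderiv j {u. c + u \<in> S} (seg f c))"
    by (rule continuous_on_eq) (metis hderiv_seg mem_Collect_eq seg_def)
qed

lemma Ck_seg:
  "Ck k S f \<Longrightarrow> a < b \<Longrightarrow> {c + a..c + b} \<subseteq> S \<Longrightarrow> Ck k {a..b} (seg f c)"
  by (rule Ck_subset[OF dense_in_itself_Icc _ Ck_seg_shift]) auto

section \<open>One-sided derivatives\<close>

lemma real_induct_Icc:
  fixes a b :: real
  assumes "a \<le> b" and base: "P a"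
    and left: "\<And>c. a < c \<Longrightarrow> c \<le> b \<Longrightarrow> (\<And>u. a \<le> u \<Longrightarrow> u < c \<Longrightarrow> P u) \<Longrightarrow> P c"
    and right: "\<And>c. a \<le> c \<Longrightarrow> c < b \<Longrightarrow> (\<And>u. a \<le> u \<Longrightarrow> u \<le> c \<Longrightarrow> P u) \<Longrightarrow>
      \<exists>d>0. \<forall>u. c < u \<and> u < c + d \<longrightarrow> P u"
  shows "s \<in> {a..b} \<Longrightarrow> P s"
proof -
  define A where "A = {s\<in>{a..b}. \<forall>u\<in>{a..s}. P u}"
  define c where "c = Sup A"
  have "a \<in> A"
    using assms(1) base by (auto simp: A_def)
  moreover have bdd: "bdd_above A"
    by (auto simp: A_def bdd_above_def)
  ultimately have ac: "a \<le> c"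
    unfolding c_def by (rule cSup_upper)
  have cb: "c \<le> b"
    unfolding c_def using \<open>a \<in> A\<close> by (intro cSup_least) (auto simp: A_def)
  have below: "P u" if u: "a \<le> u" "u < c" for u
  proof -
    obtain s where "s \<in> A" "u < s"
      using less_cSup_iff[OF _ bdd] \<open>a \<in> A\<close> u(2) unfolding c_def by blast
    then show ?thesis using u(1) by (auto simp: A_def)
  qed
  have "P c"
    using left[OF _ cb below] base ac by (cases "a = c") auto
  then have "c \<in> A"
    using ac cb below by (auto simp: A_def le_less)
  have "c = b"
  proof (rule ccontr)
    assume "c \<noteq> b"
    with cb have "c < b" by simp
    then obtain d where "d > 0" and d: "\<And>u. c < u \<Longrightarrow> u < c + d \<Longrightarrow> P u"
      using right[OF ac] below \<open>P c\<close> by (metis order.not_eq_order_implies_strict)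
    define y where "y = min (c + d/2) b"
    have "c < y"
      using \<open>d > 0\<close> \<open>c < b\<close> by (simp add: y_def)
    then have "y \<in> A"
      using \<open>c \<in> A\<close> d \<open>d > 0\<close> ac by (fastforce simp: A_def y_def)
    then have "y \<le> c"
      unfolding c_def using bdd by (rule cSup_upper)
    with \<open>c < y\<close> show False by simp
  qed
  with \<open>c \<in> A\<close> show "s \<in> {a..b} \<Longrightarrow> P s"
    by (auto simp: A_def)
qed

lemma right_derivative_zero_imp_constant:
  fixes z :: "real \<Rightarrow> 'a::real_normed_vector"
  assumes ab: "a \<le> b" and cont: "continuous_on {a..b} z"
    and der: "\<And>s. s \<in> {a..<b} \<Longrightarrow> (z has_vector_derivative 0) (at_right s)"
    and s: "s \<in> {a..b}"
  shows "z s = z a"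
proof -
  have bound: "norm (z s - z a) \<le> e * (s - a)" if "e > 0" for e
    using ab _ _ _ s
  proof (rule real_induct_Icc[where P = "\<lambda>s. norm (z s - z a) \<le> e * (s - a)"])
    fix c assume ac: "a < c" and cb: "c \<le> b" and IH: "\<And>u. a \<le> u \<Longrightarrow> u < c \<Longrightarrow>
        norm (z u - z a) \<le> e * (u - a)"
    have "(z \<longlongrightarrow> z c) (at c within {a..b})"
      using cont ac cb unfolding continuous_on_def by auto
    then have "(z \<longlongrightarrow> z c) (at c within {a..<c})"
      by (rule tendsto_within_subset) (use cb in auto)
    then show "norm (z c - z a) \<le> e * (c - a)"
      using ac IH
      by (intro tendsto_le[of "at c within {a..<c}" "\<lambda>u. e * (u - a)" _ "\<lambda>u. norm (z u - z a)"])
        (auto intro!: tendsto_intros simp: trivial_limit_within eventually_at_filter)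
  next
    fix c assume ac: "a \<le> c" and cb: "c < b" and IH: "\<And>u. a \<le> u \<Longrightarrow> u \<le> c \<Longrightarrow>
        norm (z u - z a) \<le> e * (u - a)"
    have "(z has_derivative (\<lambda>h. h *\<^sub>R 0)) (at c within {c<..})"
      using der ac cb by (auto simp: has_vector_derivative_def)
    then obtain d where "d > 0" and
      d: "\<And>y. y \<in> {c<..} \<Longrightarrow> 0 < norm (y - c) \<Longrightarrow> norm (y - c) < d \<Longrightarrow>
          norm (z y - z c - (y - c) *\<^sub>R 0) / norm (y - c) < e"
      using \<open>e > 0\<close> unfolding has_derivative_within' by meson
    have "norm (z u - z a) \<le> e * (u - a)" if "c < u" "u < c + d" for u
    proof -
      have "norm (z u - z c) < e * (u - c)"
        using d[of u] that by (simp add: divide_less_eq)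
      moreover have "norm (z u - z a) \<le> norm (z u - z c) + norm (z c - z a)"
        by (metis diff_add_cancel norm_triangle_ineq add_diff_eq)
      ultimately show ?thesis
        using IH[OF ac order_refl] by (simp add: algebra_simps)
    qed
    with \<open>d > 0\<close> show "\<exists>d>0. \<forall>u. c < u \<and> u < c + d \<longrightarrow> norm (z u - z a) \<le> e * (u - a)"
      by blast
  qed simp
  show ?thesis
  proof (rule ccontr)
    assume "z s \<noteq> z a"
    then have "s > a"
      using s by (cases "s = a") auto
    define e where "e = norm (z s - z a) / (2 * (s - a))"
    have "e > 0"
      using \<open>z s \<noteq> z a\<close> \<open>s > a\<close> by (simp add: e_def)
    have "norm (z s - z a) \<le> e * (s - a)"
      using bound[OF \<open>e > 0\<close>] .
    also have "\<dots> = norm (z s - z a) / 2"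
      using \<open>s > a\<close> by (simp add: e_def field_simps)
    finally show False
      using \<open>z s \<noteq> z a\<close> by simp
  qed
qed

lemma right_derivative_imp_has_vector_derivative:
  fixes x :: "real \<Rightarrow> 'a::banach"
  assumes ab: "a \<le> b" and x: "continuous_on {a..b} x" and F: "continuous_on {a..b} F"
    and der: "\<And>s. s \<in> {a..<b} \<Longrightarrow> (x has_vector_derivative F s) (at_right s)"
    and t: "t \<in> {a..b}"
  shows "(x has_vector_derivative F t) (at t within {a..b})"
proof -
  \<comment> \<open>compare x with the primitive of its continuous right derivative\<close>
  define y where "y s = x a + integral {a..s} F" for s
  have y: "(y has_vector_derivative F s) (at s within {a..b})" if "s \<in> {a..b}" for s
    unfolding y_def using integral_has_vector_derivative[OF F that]
    by (simp add: has_vector_derivative_add_const add.commute[of "x a"])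
  have "continuous_on {a..b} y"
    unfolding continuous_on_eq_continuous_within
    using has_vector_derivative_continuous[OF y] by blast
  then have "continuous_on {a..b} (\<lambda>s. x s - y s)"
    using x by (rule continuous_on_diff[rotated])
  moreover have "((\<lambda>s. x s - y s) has_vector_derivative 0) (at_right s)" if "s \<in> {a..<b}" for s
  proof -
    have "(y has_vector_derivative F s) (at s within {s..b})"
      using y[of s] that by (auto intro: has_vector_derivative_within_subset)
    then have "(y has_vector_derivative F s) (at_right s)"
      using that by (simp add: at_within_Icc_at_right)
    from has_vector_derivative_diff[OF der[OF that] this] show ?thesis
      by simp
  qed
  ultimately have const: "x s - y s = x a - y a" if "s \<in> {a..b}" for s
    by (rule right_derivative_zero_imp_constant[OF ab _ _ that])
  have "y s = x s" if "s \<in> {a..b}" for s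
    using const[OF that] by (simp add: y_def)
  then show ?thesis
    by (rule has_vector_derivative_weaken[OF y[OF t] t order_refl])
qed

section \<open>Regularity of solutions of the delay equation\<close>

lemma solution_continuous_on:
  assumes "continuous_on {-tau..0} x0" and "is_solution f tau T x0 x"
  shows "continuous_on {-tau..T} x"
proof -
  have "continuous_on {-tau..0} x"
    using assms unfolding is_solution_def by (metis continuous_on_cong)
  then have "continuous_on ({-tau..0} \<union> {0..T}) x"
    using assms(2) unfolding is_solution_def by (intro continuous_on_closed_Un) auto
  then show ?thesis
    by (rule continuous_on_subset) auto
qed

lemma solution_Ck:
  fixes f :: "'a::euclidean_space \<Rightarrow> 'a \<Rightarrow> 'a"
  assumes f: "C_inf (\<lambda>(u, v). f u v)" and tau: "tau > 0"
    and x0: "continuous_on {-tau..0} x0" and sol: "is_solution f tau T x0 x"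
  shows "(real k - 1) * tau \<le> a \<Longrightarrow> a < b \<Longrightarrow> b \<le> T \<Longrightarrow> Ck k {a..b} x"
proof (induction k arbitrary: a b)
  case 0
  have "continuous_on {a..b} x"
    using solution_continuous_on[OF x0 sol] by (rule continuous_on_subset) (use 0 in auto)
  then show ?case by (simp add: Ck_0_iff)
next
  case (Suc k)
  have ka: "real k * tau \<le> a"
    using Suc.prems by simp
  then have "0 \<le> a"
    using tau by (meson mult_nonneg_nonneg of_nat_0_le_iff order_trans less_imp_le)
  have S: "dense_in_itself {a..b}"
    using Suc.prems by (simp add: dense_in_itself_Icc)
  have x: "Ck k {a..b} x"
    using Suc.IH[of a b] Suc.prems ka tau by (simp add: algebra_simps)
  have "Ck k {a - tau..b - tau} x"
    using Suc.IH[of "a - tau" "b - tau"] Suc.prems ka tau by (simp add: algebra_simps)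
  then have "Ck k {a..b} (seg x (-tau))"
    using Suc.prems(2) by (rule Ck_seg) auto
  moreover have "seg x (-tau) = (\<lambda>s. x (s - tau))"
    by (simp add: seg_def fun_eq_iff algebra_simps)
  ultimately have "Ck k {a..b} (\<lambda>s. (\<lambda>(u, v). f u v) (x s, x (s - tau)))"
    using Ck_compose_C_inf[OF S f Ck_Pair[OF S x]] by simp
  then have F: "Ck k {a..b} (\<lambda>s. f (x s) (x (s - tau)))"
    by simp
  have "(x has_vector_derivative f (x s) (x (s - tau))) (at s within {a..b})" if "s \<in> {a..b}" for s
  proof (rule right_derivative_imp_has_vector_derivative[OF _ _ _ _ that])
    show "(x has_vector_derivative f (x s) (x (s - tau))) (at_right s)" if "s \<in> {a..<b}" for s
      using sol \<open>0 \<le> a\<close> Suc.prems(3) that unfolding is_solution_def by auto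
  qed (use Suc.prems(2) Ck_imp_continuous_on[OF x] Ck_imp_continuous_on[OF F] in auto)
  then show ?case
    by (rule Ck_SucI[OF S _ Ck_imp_continuous_on[OF x] F])
qed

section \<open>Taylor expansion with remainder in a box\<close>

lemma has_integral_in_box_scaled:
  fixes v :: "real \<Rightarrow> real ^ 'n"
  assumes B: "is_box B" and v: "\<And>t. t \<in> {a..b} \<Longrightarrow> v t \<in> B"
    and w: "\<And>t. t \<in> {a..b} \<Longrightarrow> 0 \<le> w t" and W: "(w has_integral W) {a..b}" "W > 0"
    and I: "((\<lambda>t. w t *\<^sub>R v t) has_integral I) {a..b}"
  shows "\<exists>c\<in>B. I = W *\<^sub>R c"
proof -
  obtain lo hi where B: "B = cbox lo hi"
    using B unfolding is_box_def by blast
  have "W * lo $ j \<le> I $ j \<and> I $ j \<le> W * hi $ j" for j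
  proof -
    have Ij: "((\<lambda>t. w t * v t $ j) has_integral I $ j) {a..b}"
      using has_integral_linear[OF I bounded_linear_vec_nth[of j]] by (simp add: o_def)
    have "w t * lo $ j \<le> w t * v t $ j" "w t * v t $ j \<le> w t * hi $ j" if "t \<in> {a..b}" for t
      using v[OF that] w[OF that] unfolding B mem_box_cart by (auto intro: mult_left_mono)
    then show ?thesis
      using has_integral_le[OF has_integral_mult_left[OF W(1)] Ij]
        has_integral_le[OF Ij has_integral_mult_left[OF W(1)]] by simp
  qed
  then have "(1 / W) *\<^sub>R I \<in> B"
    unfolding B mem_box_cart using W(2) by (auto simp: field_simps)
  moreover have "I = W *\<^sub>R ((1 / W) *\<^sub>R I)"
    using W(2) by simp
  ultimately show ?thesis by blast
qed

lemma has_integral_Taylor_weight: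
  fixes a b :: real
  assumes "a \<le> b"
  shows "((\<lambda>t. (b - t) ^ Q / fact Q) has_integral (b - a) ^ Suc Q / fact (Suc Q)) {a..b}"
proof -
  have "((\<lambda>t. (b - t) ^ Suc Q) has_real_derivative real (Suc Q) * (b - t) ^ Q * (- 1))
      (at t within {a..b})" for t
    by (rule derivative_eq_intros refl | simp)+
  from DERIV_cmult[OF this, of "- 1 / fact (Suc Q)"]
  have "((\<lambda>t. - 1 / fact (Suc Q) * (b - t) ^ Suc Q) has_vector_derivative (b - t) ^ Q / fact Q)
      (at t within {a..b})" for t
    by (simp add: has_real_derivative_iff_has_vector_derivative divide_simps)
  from fundamental_theorem_of_calculus[OF assms this] show ?thesis
    by simp
qed

lemma Taylor_in_box:
  fixes g :: "real \<Rightarrow> real ^ 'n"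
  assumes g: "Ck (Suc N) G g" and G: "{a..a + eps} \<subseteq> G" and eps: "0 < eps" and k: "k \<le> N"
    and B: "is_box B"
    and gB: "\<And>t. t \<in> {a..a + eps} \<Longrightarrow> (1 / fact (Suc N)) *\<^sub>R hderiv (Suc N) G g t \<in> B"
  shows "(1 / fact k) *\<^sub>R hderiv k G g (a + eps) \<in> box_affine
     (\<Sum>l = 0..N - k. (real ((k + l) choose k) * eps ^ l) *\<^sub>R ((1 / fact (k + l)) *\<^sub>R hderiv (k + l) G g a))
     (real (Suc N choose k) * eps ^ (Suc N - k)) B"
proof -
  define Q where "Q = N - k"
  have NQ: "Suc N - k = Suc Q" "k + Suc Q = Suc N"
    using k by (auto simp: Q_def)
  define D where "D j = hderiv (k + j) G g" for j
  have "(D j has_vector_derivative D (Suc j) t) (at t within {a..a + eps})"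
    if "j < Suc Q" "t \<in> {a..a + eps}" for j t
  proof -
    have "(hderiv (k + j) G g has_vector_derivative hderiv (Suc (k + j)) G g t) (at t within G)"
      using g that G NQ unfolding Ck_def by auto
    then show ?thesis
      unfolding D_def by (auto intro: has_vector_derivative_within_subset[OF _ G])
  qed
  then have T: "((\<lambda>t. ((a + eps - t) ^ Q / fact Q) *\<^sub>R D (Suc Q) t) has_integral
      D 0 (a + eps) - (\<Sum>i<Suc Q. (eps ^ i / fact i) *\<^sub>R D i a)) {a..a + eps}"
    using Taylor_has_integral[of "Suc Q" D "D 0" a "a + eps"] eps by auto
  \<comment> \<open>split the integrand into the weight and a function with values in B\<close>
  define w where "w t = (a + eps - t) ^ Q / fact Q * fact (Suc N)" for t
  have I: "((\<lambda>t. w t *\<^sub>R ((1 / fact (Suc N)) *\<^sub>R D (Suc Q) t)) has_integral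
      D 0 (a + eps) - (\<Sum>i<Suc Q. (eps ^ i / fact i) *\<^sub>R D i a)) {a..a + eps}"
    using T by (simp add: w_def)
  have W: "(w has_integral eps ^ Suc Q / fact (Suc Q) * fact (Suc N)) {a..a + eps}"
    unfolding w_def using has_integral_mult_left[OF has_integral_Taylor_weight[of a "a + eps" Q]] eps
    by simp
  have v: "(1 / fact (Suc N)) *\<^sub>R D (Suc Q) t \<in> B" if "t \<in> {a..a + eps}" for t
    using gB[OF that] k by (simp add: D_def Q_def)
  have w: "0 \<le> w t" if "t \<in> {a..a + eps}" for t
    using that by (simp add: w_def)
  have "eps ^ Suc Q / fact (Suc Q) * fact (Suc N) > 0"
    using eps by simp
  then obtain c where c: "c \<in> B" and rem: "D 0 (a + eps) - (\<Sum>i<Suc Q. (eps ^ i / fact i) *\<^sub>R D i a)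
      = (eps ^ Suc Q / fact (Suc Q) * fact (Suc N)) *\<^sub>R c"
    using has_integral_in_box_scaled[OF B v w W _ I] by blast
  have sum: "(1 / fact k) *\<^sub>R (\<Sum>i<Suc Q. (eps ^ i / fact i) *\<^sub>R D i a) =
      (\<Sum>l = 0..N - k. (real ((k + l) choose k) * eps ^ l) *\<^sub>R ((1 / fact (k + l)) *\<^sub>R D l a))"
  proof -
    have set: "{..<Suc Q} = {0..N - k}"
      by (auto simp: Q_def)
    have summand: "(1 / fact k) *\<^sub>R ((eps ^ l / fact l) *\<^sub>R D l a) =
        (real ((k + l) choose k) * eps ^ l) *\<^sub>R ((1 / fact (k + l)) *\<^sub>R D l a)" for l
      using binomial_fact[of k "k + l", where 'a = real] by (simp add: field_simps)
    show ?thesis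
      unfolding scaleR_sum_right set by (intro sum.cong refl summand)
  qed
  have coeff: "1 / fact k * (eps ^ Suc Q / fact (Suc Q) * fact (Suc N))
      = real (Suc N choose k) * eps ^ (Suc N - k)"
    using binomial_fact[of k "Suc N", where 'a = real] k NQ(1) by (simp add: field_simps)
  have "(1 / fact k) *\<^sub>R D 0 (a + eps) =
      (\<Sum>l = 0..N - k. (real ((k + l) choose k) * eps ^ l) *\<^sub>R ((1 / fact (k + l)) *\<^sub>R D l a))
      + (real (Suc N choose k) * eps ^ (Suc N - k)) *\<^sub>R c"
    using rem unfolding sum[symmetric] coeff[symmetric] by (simp add: algebra_simps)
  then show ?thesis
    using c unfolding box_affine_def D_def by (auto intro: image_eqI)
qed

section \<open>Piecewise derivatives on the grid\<close>

lemma pw_deriv_0 [simp]: "pw_deriv h 0 g s = g s"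
  by (simp add: pw_deriv_def Let_def)

lemma pw_deriv_on_cell:
  assumes h: "h > 0" and s: "s \<in> {of_int j * h..<of_int j * h + h}"
  shows "pw_deriv h k g s = (1 / fact k) *\<^sub>R hderiv k {of_int j * h..<of_int j * h + h} g s"
proof -
  have "\<lfloor>s / h\<rfloor> = j"
    using h s by (intro floor_unique) (auto simp: field_simps)
  then show ?thesis
    by (simp add: pw_deriv_def Let_def mult.commute)
qed

lemma pw_deriv_seg:
  assumes x: "Ck K I x" and k: "k \<le> K" and h: "h > 0"
    and s: "s \<in> {of_int j * h..<of_int j * h + h}"
    and I: "{c + of_int j * h..<c + of_int j * h + h} \<subseteq> I"
  shows "pw_deriv h k (seg x c) s = (1 / fact k) *\<^sub>R hderiv k I x (c + s)"
proof -
  have "hderiv k {of_int j * h..<of_int j * h + h} (seg x c) s = hderiv k {u. c + u \<in> I} (seg x c) s"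
    by (rule hderiv_subset[OF dense_in_itself_Ico _ Ck_seg_shift[OF x] k s]) (use h I in auto)
  also have "\<dots> = hderiv k I x (c + s)"
    by (rule hderiv_seg) (use s I in auto)
  finally show ?thesis
    by (simp add: pw_deriv_on_cell[OF h s])
qed

lemma Cp_Taylor_in_box:
  fixes y :: "real \<Rightarrow> real ^ 'n"
  assumes y: "Cp h p zeta y" and i: "i \<in> {1..p}" and eps: "0 < eps" "eps < h" and k: "k \<le> zeta i"
    and B: "is_box B" and yB: "\<forall>s\<in>{0..<h}. xifun h zeta i y s \<in> B"
  shows "pw_deriv h k y (-(real i * h) + eps) \<in> box_affine
      (\<Sum>l = 0..zeta i - k. (real ((k + l) choose k) * eps ^ l) *\<^sub>R jfun h i (k + l) y)
      (real ((zeta i + 1) choose k) * eps ^ (zeta i + 1 - k)) B"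
proof -
  define a where "a = -(real i * h)"
  have h: "h > 0"
    using eps by simp
  obtain g where g: "Ck (Suc (zeta i)) {a..a + h} g" and gy: "\<And>s. s \<in> {a..<a + h} \<Longrightarrow> g s = y s"
    using y i unfolding Cp_def a_def Suc_eq_plus1 by blast
  have cell: "pw_deriv h j y s = (1 / fact j) *\<^sub>R hderiv j {a..a + h} g s"
    if "j \<le> Suc (zeta i)" "s \<in> {a..<a + h}" for j s
  proof -
    have "pw_deriv h j y s = (1 / fact j) *\<^sub>R hderiv j {a..<a + h} y s"
      using pw_deriv_on_cell[OF h, of s "- int i"] that by (simp add: a_def)
    also have "hderiv j {a..<a + h} y s = hderiv j {a..<a + h} g s"
      using gy that(2) by (metis hderiv_cong)
    also have "\<dots> = hderiv j {a..a + h} g s"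
      by (rule hderiv_subset[OF dense_in_itself_Ico _ g that]) (use h in auto)
    finally show ?thesis .
  qed
  have Taylor: "(1 / fact k) *\<^sub>R hderiv k {a..a + h} g (a + eps) \<in> box_affine
      (\<Sum>l = 0..zeta i - k. (real ((k + l) choose k) * eps ^ l) *\<^sub>R
        ((1 / fact (k + l)) *\<^sub>R hderiv (k + l) {a..a + h} g a))
      (real (Suc (zeta i) choose k) * eps ^ (Suc (zeta i) - k)) B"
  proof (rule Taylor_in_box[OF g _ eps(1) k B])
    show "{a..a + eps} \<subseteq> {a..a + h}"
      using eps by auto
    show "(1 / fact (Suc (zeta i))) *\<^sub>R hderiv (Suc (zeta i)) {a..a + h} g t \<in> B"
      if "t \<in> {a..a + eps}" for t
      using yB[rule_format, of "t - a"] cell[of "Suc (zeta i)" t] that eps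
      by (simp add: xifun_def a_def)
  qed
  have "jfun h i (k + l) y = (1 / fact (k + l)) *\<^sub>R hderiv (k + l) {a..a + h} g a"
    if "l \<in> {0..zeta i - k}" for l
    using cell[of "k + l" a] that h k by (simp add: jfun_def a_def)
  then have "(\<Sum>l = 0..zeta i - k. (real ((k + l) choose k) * eps ^ l) *\<^sub>R jfun h i (k + l) y) =
      (\<Sum>l = 0..zeta i - k. (real ((k + l) choose k) * eps ^ l) *\<^sub>R
        ((1 / fact (k + l)) *\<^sub>R hderiv (k + l) {a..a + h} g a))"
    by (intro sum.cong refl) simp
  moreover have "pw_deriv h k y (a + eps) = (1 / fact k) *\<^sub>R hderiv k {a..a + h} g (a + eps)"
    using cell[of k "a + eps"] k eps by simp
  ultimately show ?thesis
    using Taylor unfolding a_def[symmetric] by (simp only: Suc_eq_plus1)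
qed

section \<open>Grid data of the segment x_t\<close>

lemma seg_Cp_Ck:
  assumes x: "Ck (Suc n) {t - tau..t} x" and h: "h > 0" and tau: "tau = real p * h" "tau > 0"
  shows "Cp h p (\<lambda>_. n) (seg x t) \<and> Ck (Suc n) {-tau..0} (seg x t)"
proof
  show "Cp h p (\<lambda>_. n) (seg x t)"
    unfolding Cp_def
  proof
    fix i assume i: "i \<in> {1..p}"
    have "real i * h \<le> tau" "h \<le> real i * h"
      using i h unfolding tau by (auto intro: mult_right_mono)
    then have "Ck (Suc n) {-(real i * h)..-(real i * h) + h} (seg x t)"
      using h by (intro Ck_seg[OF x]) auto
    then show "\<exists>g. Ck ((\<lambda>_. n) i + 1) {-(real i * h)..-(real i * h) + h} g \<and>
        (\<forall>s\<in>{-(real i * h)..<-(real i * h) + h}. g s = seg x t s)"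
      by auto
  qed
  show "Ck (Suc n) {-tau..0} (seg x t)"
    using tau(2) by (intro Ck_seg[OF x]) auto
qed

lemma jfun_seg_eq_pw_deriv:
  assumes x: "Ck K I x" and k: "k \<le> K" and eps: "0 \<le> eps" "eps < h"
    and I: "{c - real i * h..c - real i * h + eps + h} \<subseteq> I"
  shows "jfun h i k (seg x (c + eps)) = pw_deriv h k (seg x c) (-(real i * h) + eps)"
proof -
  have h: "h > 0"
    using eps by simp
  have "jfun h i k (seg x (c + eps)) = (1 / fact k) *\<^sub>R hderiv k I x (c + eps + -(real i * h))"
    unfolding jfun_def using I eps h by (intro pw_deriv_seg[OF x k h, of _ "- int i"]) auto
  also have "\<dots> = pw_deriv h k (seg x c) (-(real i * h) + eps)"
    using I eps by (subst pw_deriv_seg[OF x k h, of _ "- int i"]) (auto simp: algebra_simps)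
  finally show ?thesis .
qed

lemma solution_Ck_window:
  fixes f :: "'a::euclidean_space \<Rightarrow> 'a \<Rightarrow> 'a"
  assumes f: "C_inf (\<lambda>(u, v). f u v)" and tau: "tau > 0" "tau = real p * h"
    and x0: "continuous_on {-tau..0} x0" and sol: "is_solution f tau T x0 x"
    and T: "real m * h + h \<le> T"
  shows "Ck (m div p) {real m * h - tau..real m * h + h} x"
proof -
  have h: "h > 0"
    using tau by (simp add: zero_less_mult_iff)
  have "real (m div p * p) \<le> real m"
    unfolding of_nat_le_iff by (rule div_times_less_eq_dividend)
  then have "real (m div p) * tau \<le> real m * h"
    unfolding tau using h by (metis mult.assoc mult_right_mono of_nat_mult less_imp_le)
  then show ?thesis
    using T h tau by (intro solution_Ck[OF f tau(1) x0 sol]) (auto simp: algebra_simps)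
qed

lemma seg_jfun_in_box:
  fixes x :: "real \<Rightarrow> real ^ 'n"
  assumes x: "Ck K {c - tau..c + h} x" and tau: "tau = real p * h" and i: "i \<in> {1..p}"
    and eps: "0 < eps" "eps < h" and k: "k \<le> K" "k \<le> zeta i"
    and xc: "Cp h p zeta (seg x c)" and B: "is_box B"
    and xcB: "\<forall>s\<in>{0..<h}. xifun h zeta i (seg x c) s \<in> B"
  shows "jfun h i k (seg x (c + eps)) \<in> box_affine
      (\<Sum>l = 0..zeta i - k. (real ((k + l) choose k) * eps ^ l) *\<^sub>R jfun h i (k + l) (seg x c))
      (real ((zeta i + 1) choose k) * eps ^ (zeta i + 1 - k)) B"
proof -
  have "h \<le> real i * h" "real i * h \<le> tau"
    using i eps unfolding tau by (auto intro: mult_right_mono)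
  then have "c - tau \<le> c - real i * h" "c - real i * h + eps + h \<le> c + h"
    using eps by linarith+
  then have "{c - real i * h..c - real i * h + eps + h} \<subseteq> {c - tau..c + h}"
    by auto
  then have "jfun h i k (seg x (c + eps)) = pw_deriv h k (seg x c) (-(real i * h) + eps)"
    using eps by (intro jfun_seg_eq_pw_deriv[OF x k(1)]) auto
  also have "\<dots> \<in> box_affine
      (\<Sum>l = 0..zeta i - k. (real ((k + l) choose k) * eps ^ l) *\<^sub>R jfun h i (k + l) (seg x c))
      (real ((zeta i + 1) choose k) * eps ^ (zeta i + 1 - k)) B"
    by (rule Cp_Taylor_in_box[OF xc i eps k(2) B xcB])
  finally show ?thesis .
qed

lemma seg_pw_deriv_in_box_hull:
  assumes x: "Ck K {real m * h - tau..real m * h + h} x" and tau: "tau = real p * h"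
    and i: "i \<in> {1..p}" and eps: "0 \<le> eps" "eps < h"
    and L: "\<forall>u\<in>{(real m - real i) * h..<(real m - real i + 1) * h}. pw_deriv h K x u \<in> L"
    and R: "\<forall>u\<in>{(real m - real i + 1) * h..(real m - real i + 1) * h + eps}. pw_deriv h K x u \<in> R"
    and s: "s \<in> {0..<h}"
  shows "pw_deriv h K (seg x (real m * h + eps)) (-(real i * h) + s) \<in> box_hull (L \<union> R)"
proof -
  define I where "I = {real m * h - tau..real m * h + h}"
  define a where "a = (real m - real i) * h"
  define u where "u = a + eps + s"
  have h: "h > 0"
    using eps by simp
  have "h \<le> real i * h" "real i * h \<le> tau"
    using i h unfolding tau by (auto intro: mult_right_mono)
  moreover have a: "a = real m * h - real i * h"
    by (simp add: a_def algebra_simps)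
  ultimately have "real m * h - tau \<le> a" "a + 2 * h \<le> real m * h + h"
    by linarith+
  then have I: "{a..a + 2 * h} \<subseteq> I"
    by (auto simp: I_def)
  have "{real m * h + eps + of_int (- int i) * h..<real m * h + eps + of_int (- int i) * h + h} \<subseteq> I"
    using I eps by (auto simp: a)
  then have "pw_deriv h K (seg x (real m * h + eps)) (-(real i * h) + s) =
      (1 / fact K) *\<^sub>R hderiv K I x (real m * h + eps + (-(real i * h) + s))"
    using s unfolding I_def by (intro pw_deriv_seg[OF x order_refl h, of _ "- int i"]) auto
  also have "real m * h + eps + (-(real i * h) + s) = u"
    by (simp add: u_def a_def algebra_simps)
  finally have xu: "pw_deriv h K (seg x (real m * h + eps)) (-(real i * h) + s) =
      (1 / fact K) *\<^sub>R hderiv K I x u" .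
  have "(1 / fact K) *\<^sub>R hderiv K I x u \<in> L \<union> R"
  proof (cases "u < a + h")
    case True
    have "{0 + of_int (int m - int i) * h..<0 + of_int (int m - int i) * h + h} \<subseteq> I"
      using I h by (auto simp: a_def)
    with True have "pw_deriv h K x u = (1 / fact K) *\<^sub>R hderiv K I x u"
      using pw_deriv_seg[OF x order_refl h, of u "int m - int i" 0] eps s
      unfolding I_def by (auto simp: u_def a_def)
    moreover have "pw_deriv h K x u \<in> L"
      using L True eps s by (simp add: u_def a_def algebra_simps)
    ultimately show ?thesis
      by simp
  next
    case False
    have "{0 + of_int (int m - int i + 1) * h..<0 + of_int (int m - int i + 1) * h + h} \<subseteq> I"
      using I h by (auto simp: a_def algebra_simps)
    with False have "pw_deriv h K x u = (1 / fact K) *\<^sub>R hderiv K I x u"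
      using pw_deriv_seg[OF x order_refl h, of u "int m - int i + 1" 0] eps s
      unfolding I_def by (auto simp: u_def a_def algebra_simps)
    moreover have "pw_deriv h K x u \<in> R"
      using R False eps s by (simp add: u_def a_def algebra_simps)
    ultimately show ?thesis
      by simp
  qed
  then show ?thesis
    unfolding xu box_hull_def by blast
qed

theorem mainTheorem2:
  fixes f :: "real ^ 'd \<Rightarrow> real ^ 'd \<Rightarrow> real ^ 'd"
    and tau h T eps :: real and p m :: nat
    and eta zeta zeta' :: "nat \<Rightarrow> nat"
    and x0 x :: "real \<Rightarrow> real ^ 'd"
    and Xi' :: "(real ^ 'd) set"
    and Xi L R :: "nat \<Rightarrow> (real ^ 'd) set"
  assumes f_smooth: "C_inf (\<lambda>(u, v). f u v)"
    and tau_pos: "tau > 0" and p_pos: "p \<ge> 1" and h_def: "h = tau / real p"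
    and x0_C: "Cp h p eta x0" and x0_cont: "continuous_on {-tau..0} x0"
    and sol: "is_solution f tau T x0 x"
    and eps: "0 < eps" "eps < h"
    and tT: "real m * h + eps + h \<le> T"
    and n_nonneg: "m div p \<ge> 1"
    and zeta: "Cp h p zeta (seg x (real m * h))" "\<forall>i\<in>{1..p}. zeta i \<ge> m div p - 1"
    and zeta': "Cp h p zeta' (seg x (real (m + 1) * h))"
    and Xi'_box: "is_box Xi'" "\<forall>s\<in>{0..<h}. xifun h zeta' 1 (seg x (real (m + 1) * h)) s \<in> Xi'"
    and Xi_box: "\<forall>i\<in>{1..p}. is_box (Xi i) \<and>
                   (\<forall>s\<in>{0..<h}. xifun h zeta i (seg x (real m * h)) s \<in> Xi i)"
    and L_box: "\<forall>i\<in>{1..p}. is_box (L i) \<and>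
                   (\<forall>s\<in>{(real m - real i) * h ..< (real m - real i + 1) * h}.
                       pw_deriv h (m div p) x s \<in> L i)"
    and R_box: "\<forall>i\<in>{1..p}. is_box (R i) \<and>
                   (\<forall>s\<in>{(real m - real i + 1) * h .. (real m - real i + 1) * h + eps}.
                       pw_deriv h (m div p) x s \<in> R i)"
  shows "let t = real m * h + eps; n = m div p - 1; xt = seg x t;
             xm = seg x (real m * h); xm1 = seg x (real (m + 1) * h) in
           (Cp h p (\<lambda>_. n) xt \<and> Ck (n + 1) {-tau..0} xt)
         \<and> zfun xt \<in> box_affine (\<Sum>k = 0..zeta' 1. eps ^ k *\<^sub>R jfun h 1 k xm1)
                                 (eps ^ (zeta' 1 + 1)) Xi'
         \<and> (\<forall>i\<in>{1..p}. \<forall>k\<in>{0..n}.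
               jfun h i k xt \<in>
                 box_affine (\<Sum>l = 0..zeta i - k. (real ((k + l) choose k) * eps ^ l) *\<^sub>R jfun h i (k + l) xm)
                            (real ((zeta i + 1) choose k) * eps ^ (zeta i + 1 - k)) (Xi i))
         \<and> (\<forall>i\<in>{1..p}. \<forall>s\<in>{0..<h}. xifun h (\<lambda>_. n) i xt s \<in> box_hull (L i \<union> R i))"
proof -
  have tau: "tau = real p * h"
    using p_pos h_def by simp
  have x: "Ck (m div p) {real m * h - tau..real m * h + h} x"
    using tT eps by (intro solution_Ck_window[OF f_smooth tau_pos tau x0_cont sol]) simp
  have n: "m div p = Suc (m div p - 1)"
    using n_nonneg by simp
  have "Ck (m div p) {real m * h + eps - tau..real m * h + eps} x"
    using eps by (intro Ck_subset[OF dense_in_itself_Icc _ x]) (auto simp: tau_pos)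
  then have A: "Cp h p (\<lambda>_. m div p - 1) (seg x (real m * h + eps)) \<and>
      Ck (Suc (m div p - 1)) {-tau..0} (seg x (real m * h + eps))"
    using eps n by (intro seg_Cp_Ck[OF _ _ tau tau_pos]) simp_all
  have B: "zfun (seg x (real m * h + eps)) \<in> box_affine
      (\<Sum>k = 0..zeta' 1. eps ^ k *\<^sub>R jfun h 1 k (seg x (real (m + 1) * h))) (eps ^ (zeta' 1 + 1)) Xi'"
    using Cp_Taylor_in_box[OF zeta' _ eps _ Xi'_box, of 0] p_pos
    by (simp add: zfun_def seg_def algebra_simps)
  have C: "jfun h i k (seg x (real m * h + eps)) \<in> box_affine
      (\<Sum>l = 0..zeta i - k. (real ((k + l) choose k) * eps ^ l) *\<^sub>R jfun h i (k + l) (seg x (real m * h)))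
      (real ((zeta i + 1) choose k) * eps ^ (zeta i + 1 - k)) (Xi i)"
    if "i \<in> {1..p}" "k \<in> {0..m div p - 1}" for i k
    using that zeta(2)[rule_format, OF that(1)] Xi_box
    by (intro seg_jfun_in_box[OF x tau _ eps _ _ zeta(1)]) auto
  have D: "pw_deriv h (m div p) (seg x (real m * h + eps)) (-(real i * h) + s) \<in> box_hull (L i \<union> R i)"
    if "i \<in> {1..p}" "s \<in> {0..<h}" for i s
    using that L_box R_box eps by (intro seg_pw_deriv_in_box_hull[OF x tau]) auto
  show ?thesis
    unfolding Let_def using A B C D n by (simp add: xifun_def)
qed

end
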